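(* Let $G=(V,E)$ be a connected undirected simple graph with $n=|V|$ nodes, adjacency matrix $\tilde{\mathbf{A}}\in\{0,1\}^{n\times n}$ (zero diagonal), and node degrees $d_l=\sum_{j=1}^n\tilde{\mathbf{A}}_{lj}$. Let $\mathbf{D}$ be the diagonal matrix with $\mathbf{D}_{ll}=1+d_l$ and $\mathbf{A}=\mathbf{D}^{-1/2}(\tilde{\mathbf{A}}+\mathbf{I})\mathbf{D}^{-1/2}$. Let $\mathbf{W}\in\mathbb{R}^{c\times c}$, $\mathbf{B}\in\mathbb{R}^{c'\times c}$, inputs $\mathbf{U}_t\in\mathbb{R}^{n\times c'}$, and consider the recurrence $\mathbf{X}_{t+1}=\mathbf{A}\mathbf{X}_t\mathbf{W}+\mathbf{U}_{t+1}\mathbf{B}$, $\mathbf{X}_t\in\mathbb{R}^{n\times c}$. Then, for large values of $t-s$, the Jacobian from node $j$ at time $s$ to node $i$ at time $t\ge s$ admits the approximation $$\frac{\partial \mathbf{X}_t^{(i)}}{\partial \mathbf{X}_s^{(j)}}\approx\frac{\sqrt{(1+d_i)(1+d_j)}}{|V|+2|E|}\,(\mathbf{W}^{\top})^{t-s},$$ in the sense that $\frac{\partial \mathbf{X}_t^{(i)}}{\partial \mathbf{X}_s^{(j)}}=c_{ij}(t-s)\,(\mathbf{W}^{\top})^{t-s}$ for scalars $c_{ij}(t-s)$ satisfying $c_{ij}(t-s)\to\frac{\sqrt{(1+d_i)(1+d_j)}}{|V|+2|E|}$ as $t-s\to\infty$.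
   Context: $\mathbf{X}_t^{(i)}\in\mathbb{R}^{1\times c}$ denotes the $i$-th row of $\mathbf{X}_t$, regarded as a function of $\mathbf{X}_s$ through the recurrence with the inputs held fixed. The Jacobian $\partial\mathbf{y}/\partial\mathbf{x}$ of row vectors is the $c\times c$ matrix with $(p,q)$ entry $\partial y_p/\partial x_q$. $|E|$ is the number of undirected edges. *)

theory Defs
  imports "HOL-Analysis.Analysis"
begin

primrec mpow :: "real^'n^'n \<Rightarrow> nat \<Rightarrow> real^'n^'n" where
  "mpow M 0 = mat 1"
| "mpow M (Suc k) = M ** mpow M k"

text \<open>Graph on vertex type 'v given by a symmetric irreflexive edge relation E.\<close>
definition degree :: "('v \<Rightarrow> 'v \<Rightarrow> bool) \<Rightarrow> 'v \<Rightarrow> nat" where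
  "degree E l = card {j. E l j}"

definition adj_matrix :: "('v::finite \<Rightarrow> 'v \<Rightarrow> bool) \<Rightarrow> real^'v^'v" where
  "adj_matrix E = (\<chi> l j. if E l j then 1 else 0)"

definition deg_inv_sqrt :: "('v::finite \<Rightarrow> 'v \<Rightarrow> bool) \<Rightarrow> real^'v^'v" where
  "deg_inv_sqrt E = (\<chi> l j. if l = j then 1 / sqrt (1 + real (degree E l)) else 0)"

definition norm_adj :: "('v::finite \<Rightarrow> 'v \<Rightarrow> bool) \<Rightarrow> real^'v^'v" where
  "norm_adj E = deg_inv_sqrt E ** (adj_matrix E + mat 1) ** deg_inv_sqrt E"

definition undirected_edges :: "('v \<Rightarrow> 'v \<Rightarrow> bool) \<Rightarrow> 'v set set" where
  "undirected_edges E = {{u, v} | u v. E u v}"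

text \<open>State X_{s+k} of the recurrence X_{t+1} = A X_t W + U_{t+1} B, started from X_s = X.\<close>
primrec rec_state ::
  "real^'n^'n \<Rightarrow> real^'c^'c \<Rightarrow> real^'c^'d \<Rightarrow> (nat \<Rightarrow> real^'d^'n) \<Rightarrow> nat \<Rightarrow> real^'c^'n
   \<Rightarrow> nat \<Rightarrow> real^'c^'n" where
  "rec_state A W B U s X 0 = X"
| "rec_state A W B U s X (Suc k) = A ** rec_state A W B U s X k ** W + U (s + Suc k) ** B"

definition set_row :: "real^'c^'n \<Rightarrow> 'n \<Rightarrow> real^'c \<Rightarrow> real^'c^'n" where
  "set_row X j y = (\<chi> l. if l = j then y else X $ l)"

end

theory Submission
  imports Defs
begin

text \<open>Unrolling the recurrence gives X_{s+k} = A^k X_s W^k + (terms not depending on X_s), so row i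
  of X_{s+k} is an affine function of row j of X_s whose linear part is (A^k)_{ij} (W^T)^k; hence
  c_{ij}(k) = (A^k)_{ij}.

  For the limit write A = D^(1/2) P D^(-1/2) with P = D^(-1) (Atilde + I), the random walk on G with
  a self-loop at every vertex. P is stochastic, has a positive diagonal and is irreducible because
  G is connected, so some power P^m is entrywise positive. By Doeblin's contraction the oscillation of
  every column of P^k then decays geometrically, and since the distribution pi_l = (1 + d_l) / S,
  S = |V| + 2|E|, is stationary (P is reversible with respect to it), P^k_{ij} tends to pi_j.
  Therefore (A^k)_{ij} tends to sqrt (1 + d_i) pi_j / sqrt (1 + d_j) = sqrt ((1 + d_i) (1 + d_j)) / S.\<close>

lemma matrix_add_rdistrib: "((A :: 'a::semiring_1^'n^'m) + B) ** C = A ** C + B ** C"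
  by (simp add: matrix_matrix_mult_def vec_eq_iff sum.distrib distrib_right)

lemma mpow_add: "mpow M (m + k) = mpow M m ** mpow M k"
  by (induction m) (simp_all add: matrix_mul_assoc)

lemma mpow_Suc_right: "mpow M (Suc k) = mpow M k ** M"
  using mpow_add[of M k 1] by simp

lemma transpose_mpow: "transpose (mpow M k) = mpow (transpose M) k"
  by (induction k) (simp_all add: matrix_transpose_mul flip: mpow_Suc_right)

lemma mpow_similar:
  assumes "S ** S' = mat 1" and "S' ** S = mat 1"
  shows "mpow (S ** M ** S') k = S ** mpow M k ** S'"
proof (induction k)
  case 0
  then show ?case using assms(1) by simp
next
  case (Suc k)
  have "mpow (S ** M ** S') (Suc k) = S ** M ** (S' ** S) ** mpow M k ** S'"
    using Suc by (simp add: matrix_mul_assoc)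
  then show ?case using assms(2) by (simp add: matrix_mul_assoc)
qed

definition diag_mat :: "('n \<Rightarrow> real) \<Rightarrow> real^'n^'n" where
  "diag_mat a = (\<chi> i j. if i = j then a i else 0)"

lemma diag_mat_mult_left: "(diag_mat a ** M) $ i $ j = a i * M $ i $ j"
  by (simp add: diag_mat_def matrix_matrix_mult_def if_distrib[of "\<lambda>x. x * _"] cong: if_cong)

lemma diag_mat_mult_right: "(M ** diag_mat a) $ i $ j = M $ i $ j * a j"
  by (simp add: diag_mat_def matrix_matrix_mult_def if_distrib[of "\<lambda>x. _ * x"] cong: if_cong)

lemma diag_mat_mult_diag_mat: "diag_mat a ** diag_mat b = diag_mat (\<lambda>i. a i * b i)"
  by (simp add: vec_eq_iff diag_mat_mult_right) (simp add: diag_mat_def)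

lemma diag_mat_one: "diag_mat (\<lambda>_. 1) = mat 1"
  by (simp add: diag_mat_def mat_def)

section \<open>Convergence of powers of a primitive stochastic matrix\<close>

definition stochastic :: "real^'n^'n \<Rightarrow> bool" where
  "stochastic P \<longleftrightarrow> (\<forall>i j. 0 \<le> P $ i $ j) \<and> (\<forall>i. (\<Sum>j\<in>UNIV. P $ i $ j) = 1)"

lemma stochastic_mat1: "stochastic (mat 1)"
  by (simp add: stochastic_def mat_def)

lemma stochastic_mult:
  assumes "stochastic P" and "stochastic Q"
  shows "stochastic (P ** Q)"
  unfolding stochastic_def
proof (intro conjI allI)
  fix i j
  show "0 \<le> (P ** Q) $ i $ j"
    using assms by (simp add: stochastic_def matrix_matrix_mult_def sum_nonneg)
next
  fix i
  have "(\<Sum>j\<in>UNIV. (P ** Q) $ i $ j) = (\<Sum>j\<in>UNIV. \<Sum>l\<in>UNIV. P $ i $ l * Q $ l $ j)"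
    by (simp add: matrix_matrix_mult_def)
  also have "\<dots> = (\<Sum>l\<in>UNIV. P $ i $ l * (\<Sum>j\<in>UNIV. Q $ l $ j))"
    by (subst sum.swap) (simp add: sum_distrib_left)
  also have "\<dots> = 1"
    using assms by (simp add: stochastic_def)
  finally show "(\<Sum>j\<in>UNIV. (P ** Q) $ i $ j) = 1" .
qed

lemma stochastic_mpow: "stochastic P \<Longrightarrow> stochastic (mpow P k)"
  by (induction k) (simp_all add: stochastic_mat1 stochastic_mult)

lemma stationary_mpow: "\<pi> v* P = \<pi> \<Longrightarrow> \<pi> v* mpow P k = \<pi>"
  by (induction k) (simp_all add: vector_matrix_mul_rid mpow_Suc_right flip: vector_matrix_mul_assoc)

definition osc :: "('n::finite \<Rightarrow> real) \<Rightarrow> real" where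
  "osc f = Max (range f) - Min (range f)"

lemma Min_le_convex_comb_le_Max:
  fixes f :: "'n::finite \<Rightarrow> real"
  assumes "\<And>l. 0 \<le> w l" and "(\<Sum>l\<in>UNIV. w l) = 1"
  shows "Min (range f) \<le> (\<Sum>l\<in>UNIV. w l * f l)" and "(\<Sum>l\<in>UNIV. w l * f l) \<le> Max (range f)"
proof -
  have "(\<Sum>l\<in>UNIV. w l * Min (range f)) \<le> (\<Sum>l\<in>UNIV. w l * f l)"
    by (intro sum_mono mult_left_mono) (simp_all add: assms)
  then show "Min (range f) \<le> (\<Sum>l\<in>UNIV. w l * f l)"
    by (simp add: assms flip: sum_distrib_right)
  have "(\<Sum>l\<in>UNIV. w l * f l) \<le> (\<Sum>l\<in>UNIV. w l * Max (range f))"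
    by (intro sum_mono mult_left_mono) (simp_all add: assms)
  then show "(\<Sum>l\<in>UNIV. w l * f l) \<le> Max (range f)"
    by (simp add: assms flip: sum_distrib_right)
qed

lemma dist_convex_comb_le_osc:
  fixes f :: "'n::finite \<Rightarrow> real"
  assumes "\<And>l. 0 \<le> w l" and "(\<Sum>l\<in>UNIV. w l) = 1"
  shows "\<bar>f i - (\<Sum>l\<in>UNIV. w l * f l)\<bar> \<le> osc f"
proof -
  have "Min (range f) \<le> f i" and "f i \<le> Max (range f)"
    by simp_all
  with Min_le_convex_comb_le_Max[OF assms, of f] show ?thesis
    unfolding osc_def abs_le_iff by linarith
qed

text \<open>Doeblin's argument: every row of Q puts weight at least d both on a minimiser and on a
  maximiser of f.\<close>
lemma osc_stochastic_mult_le: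
  fixes f :: "'n::finite \<Rightarrow> real"
  assumes Q: "stochastic Q" and d: "\<And>i l. d \<le> Q $ i $ l"
  shows "osc (\<lambda>i. \<Sum>l\<in>UNIV. Q $ i $ l * f l) \<le> (1 - 2 * d) * osc f"
proof -
  define a where "a = Min (range f)"
  define b where "b = Max (range f)"
  have "a \<in> range f" and "b \<in> range f"
    unfolding a_def b_def by simp_all
  then obtain l0 l1 where l0: "f l0 = a" and l1: "f l1 = b"
    by blast
  have fa: "a \<le> f l" and fb: "f l \<le> b" for l
    unfolding a_def b_def by simp_all
  have Q_nonneg: "0 \<le> Q $ i $ l" and Q_sum: "(\<Sum>l\<in>UNIV. Q $ i $ l) = 1" for i l
    using Q by (simp_all add: stochastic_def)
  have upper: "(\<Sum>l\<in>UNIV. Q $ i $ l * f l) \<le> b - d * (b - a)" for i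
  proof -
    have "d * (b - a) \<le> Q $ i $ l0 * (b - f l0)"
      using d[of i l0] fa[of l1] l0 l1 by (simp add: mult_right_mono)
    also have "\<dots> \<le> (\<Sum>l\<in>UNIV. Q $ i $ l * (b - f l))"
      by (rule member_le_sum) (simp_all add: Q_nonneg fb)
    also have "\<dots> = b - (\<Sum>l\<in>UNIV. Q $ i $ l * f l)"
      by (simp add: right_diff_distrib sum_subtractf Q_sum flip: sum_distrib_right)
    finally show ?thesis
      by simp
  qed
  have lower: "a + d * (b - a) \<le> (\<Sum>l\<in>UNIV. Q $ i $ l * f l)" for i
  proof -
    have "d * (b - a) \<le> Q $ i $ l1 * (f l1 - a)"
      using d[of i l1] fb[of l0] l0 l1 by (simp add: mult_right_mono)
    also have "\<dots> \<le> (\<Sum>l\<in>UNIV. Q $ i $ l * (f l - a))"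
      by (rule member_le_sum) (simp_all add: Q_nonneg fa)
    also have "\<dots> = (\<Sum>l\<in>UNIV. Q $ i $ l * f l) - a"
      by (simp add: right_diff_distrib sum_subtractf Q_sum flip: sum_distrib_right)
    finally show ?thesis
      by simp
  qed
  have "Max (range (\<lambda>i. \<Sum>l\<in>UNIV. Q $ i $ l * f l)) \<le> b - d * (b - a)"
    using upper by simp
  moreover have "a + d * (b - a) \<le> Min (range (\<lambda>i. \<Sum>l\<in>UNIV. Q $ i $ l * f l))"
    using lower by simp
  moreover have "(1 - 2 * d) * (b - a) = (b - d * (b - a)) - (a + d * (b - a))"
    by (simp add: algebra_simps)
  ultimately show ?thesis
    unfolding osc_def a_def[symmetric] b_def[symmetric] by linarith
qed

lemma osc_column_mpow_le:
  fixes P :: "real^'n^'n"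
  assumes P: "stochastic P" and d: "\<And>i l. d \<le> mpow P m $ i $ l" "d \<le> 1/2"
  shows "osc (\<lambda>l. mpow P k $ l $ j) \<le> (1 - 2 * d) ^ (k div m) * osc (\<lambda>l. mpow P 0 $ l $ j)"
proof -
  define g where "g k = osc (\<lambda>l. mpow P k $ l $ j)" for k
  have "decseq g"
  proof (rule decseq_SucI)
    fix k
    have "mpow P (Suc k) $ l $ j = (\<Sum>r\<in>UNIV. P $ l $ r * mpow P k $ r $ j)" for l
      by (simp add: matrix_matrix_mult_def)
    then show "g (Suc k) \<le> g k"
      using osc_stochastic_mult_le[OF P, of 0 "\<lambda>r. mpow P k $ r $ j"] P
      by (simp add: g_def stochastic_def)
  qed
  have g_contract: "g (m + k) \<le> (1 - 2 * d) * g k" for k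
  proof -
    have "mpow P (m + k) $ l $ j = (\<Sum>r\<in>UNIV. mpow P m $ l $ r * mpow P k $ r $ j)" for l
      by (simp add: mpow_add matrix_matrix_mult_def)
    then show ?thesis
      using osc_stochastic_mult_le[OF stochastic_mpow[OF P] d(1), of "\<lambda>r. mpow P k $ r $ j"]
      by (simp add: g_def)
  qed
  have g_mult: "g (m * q) \<le> (1 - 2 * d) ^ q * g 0" for q
  proof (induction q)
    case (Suc q)
    have "g (m * Suc q) \<le> (1 - 2 * d) * g (m * q)"
      using g_contract[of "m * q"] by simp
    also have "\<dots> \<le> (1 - 2 * d) * ((1 - 2 * d) ^ q * g 0)"
      using Suc d(2) by (intro mult_left_mono) simp_all
    finally show ?case
      by simp
  qed simp
  have "g k \<le> g (m * (k div m))"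
    using \<open>decseq g\<close> by (simp add: decseqD)
  also have "\<dots> \<le> (1 - 2 * d) ^ (k div m) * g 0"
    by (rule g_mult)
  finally show ?thesis
    unfolding g_def .
qed

lemma stochastic_mpow_tendsto_stationary:
  fixes P :: "real^'n^'n"
  assumes P: "stochastic P"
    and primitive: "0 < m" "\<And>i j. 0 < mpow P m $ i $ j"
    and \<pi>: "\<And>i. 0 \<le> \<pi> $ i" "(\<Sum>i\<in>UNIV. \<pi> $ i) = 1" "\<pi> v* P = \<pi>"
  shows "(\<lambda>k. mpow P k $ i $ j) \<longlonglongrightarrow> \<pi> $ j"
proof -
  \<comment> \<open>Capping at 1/2 keeps the contraction factor nonnegative, which matters for a single state.\<close>
  define d where "d = min (1/2) (Min (range (\<lambda>(i, l). mpow P m $ i $ l)))"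
  have "0 < Min (range (\<lambda>(i, l). mpow P m $ i $ l))"
    using primitive(2) by (simp add: Min_gr_iff)
  then have contraction: "0 \<le> 1 - 2 * d" "1 - 2 * d < 1"
    by (simp_all add: d_def)
  have d_le: "d \<le> mpow P m $ i $ l" for i l
  proof -
    have "Min (range (\<lambda>(i, l). mpow P m $ i $ l)) \<le> mpow P m $ i $ l"
      by (rule Min_le) (auto simp: image_iff)
    then show ?thesis
      by (simp add: d_def min.coboundedI2)
  qed
  define C where "C = osc (\<lambda>l. mpow P 0 $ l $ j)"
  have close: "\<bar>mpow P k $ i $ j - \<pi> $ j\<bar> \<le> (1 - 2 * d) ^ (k div m) * C" for k
  proof -
    have "\<pi> $ j = (\<Sum>l\<in>UNIV. \<pi> $ l * mpow P k $ l $ j)"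
      using stationary_mpow[OF \<pi>(3), of k]
      by (simp add: vector_matrix_mult_def vec_eq_iff mult.commute)
    then have "\<bar>mpow P k $ i $ j - \<pi> $ j\<bar> \<le> osc (\<lambda>l. mpow P k $ l $ j)"
      using dist_convex_comb_le_osc[where w = "\<lambda>l. \<pi> $ l" and f = "\<lambda>l. mpow P k $ l $ j"] \<pi>(1,2)
      by simp
    also have "\<dots> \<le> (1 - 2 * d) ^ (k div m) * C"
      unfolding C_def by (rule osc_column_mpow_le[OF P d_le]) (simp add: d_def)
    finally show ?thesis .
  qed
  have "(\<lambda>k. (1 - 2 * d) ^ (k div m)) \<longlonglongrightarrow> 0"
    using contraction primitive(1)
    by (intro filterlim_compose[OF LIMSEQ_power_zero filterlim_at_top_div_const_nat]) simp_all
  then have "(\<lambda>k. (1 - 2 * d) ^ (k div m) * C) \<longlonglongrightarrow> 0"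
    by (rule tendsto_mult_left_zero)
  then have "(\<lambda>k. mpow P k $ i $ j - \<pi> $ j) \<longlonglongrightarrow> 0"
    by (rule Lim_null_comparison[rotated]) (simp add: close)
  then show ?thesis
    by (rule LIM_zero_cancel)
qed

lemma matrix_mult_entry_ge:
  fixes M N :: "real^'n^'n"
  assumes "\<And>i j. 0 \<le> M $ i $ j" and "\<And>i j. 0 \<le> N $ i $ j"
  shows "M $ i $ l * N $ l $ j \<le> (M ** N) $ i $ j"
  unfolding matrix_matrix_mult_def
  by (simp add: member_le_sum[where f = "\<lambda>l. M $ i $ l * N $ l $ j"] assms)

lemma mpow_nonneg: "(\<And>i j. 0 \<le> P $ i $ j) \<Longrightarrow> 0 \<le> mpow P k $ i $ j"
  by (induction k arbitrary: i j) (simp_all add: mat_def matrix_matrix_mult_def sum_nonneg)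

lemma lazy_irreducible_imp_primitive:
  fixes P :: "real^'n^'n"
  assumes nonneg: "\<And>i j. 0 \<le> P $ i $ j" and lazy: "\<And>i. 0 < P $ i $ i"
    and irreducible: "\<And>i j. (\<lambda>a b. 0 < P $ a $ b)\<^sup>*\<^sup>* i j"
  shows "\<exists>m>0. \<forall>i j. 0 < mpow P m $ i $ j"
proof -
  have entry_ge: "mpow P k $ i $ l * P $ l $ j \<le> mpow P (Suc k) $ i $ j" for k i l j
    unfolding mpow_Suc_right by (intro matrix_mult_entry_ge mpow_nonneg nonneg)
  have positive_Suc: "0 < mpow P (Suc k) $ i $ j" if "0 < mpow P k $ i $ j" for k i j
    using mult_pos_pos[OF that lazy[of j]] entry_ge[of k i j j] by linarith
  have positive_mono: "0 < mpow P k' $ i $ j" if "k \<le> k'" "0 < mpow P k $ i $ j" for k k' i j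
    using that by (induction k' rule: dec_induct) (simp_all add: positive_Suc del: mpow.simps)
  have "\<exists>k. 0 < mpow P k $ i $ j" for i j
    using irreducible[of i j]
  proof (induction rule: rtranclp_induct)
    case base
    show ?case
      by (rule exI[of _ 0]) (simp add: mat_def)
  next
    case (step l j)
    then obtain k where "0 < mpow P k $ i $ l"
      by blast
    with step.hyps(2) have "0 < mpow P (Suc k) $ i $ j"
      using mult_pos_pos entry_ge[of k i l j] by (meson less_le_trans)
    then show ?case ..
  qed
  then obtain K where K: "\<And>i j. 0 < mpow P (K i j) $ i $ j"
    by metis
  define m where "m = Suc (Max (range (\<lambda>(i, j). K i j)))"
  have "K i j \<le> Max (range (\<lambda>(i, j). K i j))" for i j
    by (rule Max_ge) (auto simp: image_iff)
  then have "K i j \<le> m" for i j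
    by (simp add: m_def le_SucI)
  with K positive_mono have "0 < mpow P m $ i $ j" for i j
    by blast
  moreover have "0 < m"
    by (simp add: m_def)
  ultimately show ?thesis
    by blast
qed

section \<open>The random walk of the graph with self-loops\<close>

text \<open>The degree after adding a self-loop at every vertex, i.e. the diagonal entries of D.\<close>
definition aug_degree :: "('v \<Rightarrow> 'v \<Rightarrow> bool) \<Rightarrow> 'v \<Rightarrow> real" where
  "aug_degree E l = 1 + real (degree E l)"

lemma aug_degree_pos: "0 < aug_degree E l"
  by (simp add: aug_degree_def add_pos_nonneg)

lemma row_sum_adj_matrix_plus_one:
  fixes E :: "'v::finite \<Rightarrow> 'v \<Rightarrow> bool"
  shows "(\<Sum>l\<in>UNIV. (adj_matrix E + mat 1) $ i $ l) = aug_degree E i"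
  by (simp add: adj_matrix_def mat_def sum.distrib aug_degree_def degree_def sum.If_cases)

lemma sum_degree_eq_twice_edges:
  fixes E :: "'v::finite \<Rightarrow> 'v \<Rightarrow> bool"
  assumes sym: "\<And>u v. E u v \<Longrightarrow> E v u" and irrefl: "\<And>u. \<not> E u u"
  shows "(\<Sum>l\<in>UNIV. degree E l) = 2 * card (undirected_edges E)"
proof -
  define darts where "darts e = {(u, v). E u v \<and> {u, v} = e}" for e
  have "(\<Sum>l\<in>UNIV. degree E l) = card (SIGMA l:UNIV. {j. E l j})"
    unfolding degree_def by (simp add: card_SigmaI)
  also have "(SIGMA l:UNIV. {j. E l j}) = (\<Union>e\<in>undirected_edges E. darts e)"
    unfolding darts_def undirected_edges_def by auto
  also have "card \<dots> = (\<Sum>e\<in>undirected_edges E. card (darts e))"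
    by (rule card_UN_disjoint) (auto simp: darts_def)
  also have "\<dots> = (\<Sum>e\<in>undirected_edges E. 2)"
  proof (rule sum.cong[OF refl])
    fix e
    assume "e \<in> undirected_edges E"
    then obtain u v where e: "e = {u, v}" and "E u v"
      unfolding undirected_edges_def by auto
    with sym irrefl have "darts e = {(u, v), (v, u)}" and "u \<noteq> v"
      unfolding darts_def by (auto simp: doubleton_eq_iff)
    then show "card (darts e) = 2"
      by simp
  qed
  finally show ?thesis
    by simp
qed

lemma sum_aug_degree:
  fixes E :: "'v::finite \<Rightarrow> 'v \<Rightarrow> bool"
  assumes "\<And>u v. E u v \<Longrightarrow> E v u" and "\<And>u. \<not> E u u"
  shows "(\<Sum>l\<in>UNIV. aug_degree E l) = real CARD('v) + 2 * real (card (undirected_edges E))"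
  using sum_degree_eq_twice_edges[of E, OF assms]
  by (simp add: aug_degree_def sum.distrib flip: of_nat_sum)

definition walk_matrix :: "('v::finite \<Rightarrow> 'v \<Rightarrow> bool) \<Rightarrow> real^'v^'v" where
  "walk_matrix E = diag_mat (\<lambda>l. 1 / aug_degree E l) ** (adj_matrix E + mat 1)"

lemma walk_matrix_entry: "walk_matrix E $ i $ l = (adj_matrix E + mat 1) $ i $ l / aug_degree E i"
  by (simp add: walk_matrix_def diag_mat_mult_left)

lemma norm_adj_eq_similar_walk_matrix:
  "norm_adj E = diag_mat (\<lambda>l. sqrt (aug_degree E l)) ** walk_matrix E ** diag_mat (\<lambda>l. 1 / sqrt (aug_degree E l))"
proof -
  have deg_inv_sqrt: "deg_inv_sqrt E = diag_mat (\<lambda>l. 1 / sqrt (aug_degree E l))"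
    by (simp add: deg_inv_sqrt_def diag_mat_def aug_degree_def)
  have "1 / sqrt d * x = sqrt d * (x / d)" if "0 < d" for d x :: real
    using that by (simp add: field_simps)
  then show ?thesis
    by (simp add: vec_eq_iff norm_adj_def deg_inv_sqrt diag_mat_mult_left diag_mat_mult_right
        walk_matrix_entry aug_degree_pos)
qed

lemma mpow_norm_adj:
  "mpow (norm_adj E) k
     = diag_mat (\<lambda>l. sqrt (aug_degree E l)) ** mpow (walk_matrix E) k ** diag_mat (\<lambda>l. 1 / sqrt (aug_degree E l))"
  unfolding norm_adj_eq_similar_walk_matrix
  by (intro mpow_similar) (simp_all add: diag_mat_mult_diag_mat aug_degree_pos less_imp_neq[symmetric] diag_mat_one)

lemma walk_matrix_stochastic: "stochastic (walk_matrix E)"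
  unfolding stochastic_def
proof (intro conjI allI)
  show "0 \<le> walk_matrix E $ i $ l" for i l
    by (simp add: walk_matrix_entry adj_matrix_def mat_def aug_degree_pos less_imp_le)
  have "(\<Sum>l\<in>UNIV. walk_matrix E $ i $ l) = (\<Sum>l\<in>UNIV. (adj_matrix E + mat 1) $ i $ l) / aug_degree E i" for i
    by (simp add: walk_matrix_entry sum_divide_distrib)
  then show "(\<Sum>l\<in>UNIV. walk_matrix E $ i $ l) = 1" for i
    using row_sum_adj_matrix_plus_one[of E i] by (simp add: aug_degree_pos less_imp_neq[symmetric])
qed

lemma walk_matrix_stationary:
  fixes E :: "'v::finite \<Rightarrow> 'v \<Rightarrow> bool"
  assumes sym: "\<And>u v. E u v \<Longrightarrow> E v u"
  defines "\<pi> \<equiv> \<chi> l. aug_degree E l / (\<Sum>r\<in>UNIV. aug_degree E r)"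
  shows "\<pi> v* walk_matrix E = \<pi>"
proof -
  define S where "S = (\<Sum>r\<in>UNIV. aug_degree E r)"
  have "(adj_matrix E + mat 1) $ i $ l = (adj_matrix E + mat 1) $ l $ i" for i l
    using sym by (auto simp: adj_matrix_def mat_def)
  then have "(\<Sum>i\<in>UNIV. \<pi> $ i * walk_matrix E $ i $ l) = (\<Sum>i\<in>UNIV. (adj_matrix E + mat 1) $ l $ i) / S" for l
    by (simp add: \<pi>_def S_def walk_matrix_entry aug_degree_pos less_imp_neq[symmetric] sum_divide_distrib)
  then have "(\<Sum>i\<in>UNIV. \<pi> $ i * walk_matrix E $ i $ l) = \<pi> $ l" for l
    using row_sum_adj_matrix_plus_one[of E l] by (simp add: \<pi>_def S_def)
  then show ?thesis
    by (simp add: vec_eq_iff vector_matrix_mult_def)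
qed

lemma walk_matrix_primitive:
  fixes E :: "'v::finite \<Rightarrow> 'v \<Rightarrow> bool"
  assumes connected: "\<And>u v. E\<^sup>*\<^sup>* u v"
  shows "\<exists>m>0. \<forall>i j. 0 < mpow (walk_matrix E) m $ i $ j"
proof (rule lazy_irreducible_imp_primitive)
  show "0 \<le> walk_matrix E $ i $ j" for i j
    using walk_matrix_stochastic[of E] by (simp add: stochastic_def)
  show "0 < walk_matrix E $ i $ i" for i
    by (simp add: walk_matrix_entry adj_matrix_def mat_def aug_degree_pos add_nonneg_pos)
  have "E \<le> (\<lambda>a b. 0 < walk_matrix E $ a $ b)"
    by (simp add: le_fun_def walk_matrix_entry adj_matrix_def mat_def aug_degree_pos add_pos_nonneg)
  then have "E\<^sup>*\<^sup>* \<le> (\<lambda>a b. 0 < walk_matrix E $ a $ b)\<^sup>*\<^sup>*"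
    by (rule rtranclp_mono)
  then show "(\<lambda>a b. 0 < walk_matrix E $ a $ b)\<^sup>*\<^sup>* i j" for i j
    using connected by (rule predicate2D)
qed

lemma norm_adj_mpow_tendsto:
  fixes E :: "'v::finite \<Rightarrow> 'v \<Rightarrow> bool"
  assumes sym: "\<And>u v. E u v \<Longrightarrow> E v u" and irrefl: "\<And>u. \<not> E u u"
    and connected: "\<And>u v. E\<^sup>*\<^sup>* u v"
  shows "(\<lambda>k. mpow (norm_adj E) k $ i $ j) \<longlonglongrightarrow>
    sqrt ((1 + real (degree E i)) * (1 + real (degree E j)))
      / (real CARD('v) + 2 * real (card (undirected_edges E)))"
proof -
  define S where "S = (\<Sum>r\<in>UNIV. aug_degree E r)"
  define \<pi> where "\<pi> = (\<chi> l. aug_degree E l / S)"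
  have S_pos: "0 < S"
    unfolding S_def by (simp add: sum_pos aug_degree_pos)
  obtain m where "0 < m" and "\<And>i j. 0 < mpow (walk_matrix E) m $ i $ j"
    using walk_matrix_primitive[OF connected] by blast
  moreover have "0 \<le> \<pi> $ l" for l
    using S_pos by (simp add: \<pi>_def aug_degree_pos less_imp_le)
  moreover have "(\<Sum>l\<in>UNIV. \<pi> $ l) = 1"
    using S_pos by (simp add: \<pi>_def S_def flip: sum_divide_distrib)
  moreover have "\<pi> v* walk_matrix E = \<pi>"
    unfolding \<pi>_def S_def using sym by (rule walk_matrix_stationary)
  ultimately have "(\<lambda>k. mpow (walk_matrix E) k $ i $ j) \<longlonglongrightarrow> \<pi> $ j"
    by (intro stochastic_mpow_tendsto_stationary walk_matrix_stochastic)
  then have "(\<lambda>k. sqrt (aug_degree E i) * mpow (walk_matrix E) k $ i $ j * (1 / sqrt (aug_degree E j)))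
      \<longlonglongrightarrow> sqrt (aug_degree E i) * \<pi> $ j * (1 / sqrt (aug_degree E j))"
    by (intro tendsto_mult_right tendsto_mult_left)
  also have "sqrt (aug_degree E i) * \<pi> $ j * (1 / sqrt (aug_degree E j))
      = sqrt (aug_degree E i) * (aug_degree E j / sqrt (aug_degree E j)) / S"
    by (simp add: \<pi>_def)
  also have "\<dots> = sqrt (aug_degree E i * aug_degree E j) / S"
    using aug_degree_pos[of E j] by (simp add: real_div_sqrt real_sqrt_mult)
  also have "S = real CARD('v) + 2 * real (card (undirected_edges E))"
    unfolding S_def using sym irrefl by (rule sum_aug_degree)
  finally show ?thesis
    by (simp add: mpow_norm_adj diag_mat_mult_left diag_mat_mult_right aug_degree_def)
qed

section \<open>Jacobians of the recurrence\<close>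

lemma rec_state_superposition:
  "rec_state A W B U s X k = mpow A k ** X ** mpow W k + rec_state A W B U s 0 k"
proof (induction k)
  case (Suc k)
  then have "rec_state A W B U s X (Suc k)
      = (A ** mpow A k) ** X ** (mpow W k ** W) + (A ** rec_state A W B U s 0 k ** W + U (s + Suc k) ** B)"
    by (simp add: matrix_add_ldistrib matrix_add_rdistrib matrix_mul_assoc add.assoc)
  then show ?case
    by (simp flip: mpow_Suc_right)
qed simp

lemma row_matrix_mult:
  fixes M :: "'a::comm_semiring_1^'m^'n"
  shows "(M ** V) $ i = transpose V *v M $ i"
  by (simp add: vec_eq_iff matrix_matrix_mult_def matrix_vector_mult_def transpose_def mult.commute[of "M $ i $ _"])

lemma row_mult_set_row:
  fixes Q :: "real^'n^'n" and V :: "real^'c^'c"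
  shows "(Q ** set_row X j y ** V) $ i = (Q $ i $ j *\<^sub>R transpose V) *v y + (Q ** set_row X j 0 ** V) $ i"
proof -
  define Y :: "real^'c^'n" where "Y = (\<chi> l. if l = j then y else 0)"
  have "set_row X j y = set_row X j 0 + Y"
    by (simp add: set_row_def Y_def vec_eq_iff)
  moreover have "(Q ** Y) $ i = Q $ i $ j *\<^sub>R y"
    by (simp add: vec_eq_iff matrix_matrix_mult_def Y_def
        if_distrib[of "\<lambda>v. v $ _"] if_distrib[of "\<lambda>x. _ * x"] cong: if_cong)
  ultimately show ?thesis
    by (simp add: matrix_add_ldistrib matrix_add_rdistrib row_matrix_mult[of "Q ** _"] matrix_scaleR_vector_ac)
qed

lemma rec_state_row_affine:
  "(\<lambda>y. rec_state A W B U s (set_row X j y) k $ i)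
     = (\<lambda>y. (mpow A k $ i $ j *\<^sub>R mpow (transpose W) k) *v y + rec_state A W B U s (set_row X j 0) k $ i)"
proof
  fix y
  show "rec_state A W B U s (set_row X j y) k $ i
     = (mpow A k $ i $ j *\<^sub>R mpow (transpose W) k) *v y + rec_state A W B U s (set_row X j 0) k $ i"
    using rec_state_superposition[of A W B U s "set_row X j y" k]
      rec_state_superposition[of A W B U s "set_row X j 0" k]
    by (simp add: row_mult_set_row[of _ X j y] transpose_mpow)
qed

lemma jacobian_affine:
  fixes M :: "real^'m^'n"
  shows "(\<lambda>y. M *v y + b) differentiable (at x) \<and> jacobian (\<lambda>y. M *v y + b) (at x) = M"
proof -
  have "((\<lambda>y. M *v y + b) has_derivative (*v) M) (at x)"
    by (intro has_derivative_add_const bounded_linear_imp_has_derivative) simp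
  then show ?thesis
    unfolding jacobian_def differentiable_def
    by (auto simp: frechet_derivative_at[symmetric] matrix_of_matrix_vector_mul)
qed

theorem theorem3p6:
  fixes E :: "'n::finite \<Rightarrow> 'n \<Rightarrow> bool"
    and W :: "real^'c^'c" and B :: "real^'c^'d" and U :: "nat \<Rightarrow> real^'d^'n"
  assumes sym: "\<And>u v. E u v \<Longrightarrow> E v u"
    and irrefl: "\<And>u. \<not> E u u"
    and connected: "\<And>u v. E\<^sup>*\<^sup>* u v"
  shows "\<forall>i j. \<exists>c :: nat \<Rightarrow> real.
           (\<forall>s k X. (\<lambda>y. rec_state (norm_adj E) W B U s (set_row X j y) k $ i) differentiable (at (X $ j))
               \<and> jacobian (\<lambda>y. rec_state (norm_adj E) W B U s (set_row X j y) k $ i) (at (X $ j))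
                   = c k *\<^sub>R mpow (transpose W) k)
         \<and> c \<longlonglongrightarrow> sqrt ((1 + real (degree E i)) * (1 + real (degree E j)))
                     / (real CARD('n) + 2 * real (card (undirected_edges E)))"
proof -
  have "(\<lambda>y. rec_state (norm_adj E) W B U s (set_row X j y) k $ i) differentiable (at (X $ j))
      \<and> jacobian (\<lambda>y. rec_state (norm_adj E) W B U s (set_row X j y) k $ i) (at (X $ j))
          = mpow (norm_adj E) k $ i $ j *\<^sub>R mpow (transpose W) k" for i j s k X
    unfolding rec_state_row_affine by (rule jacobian_affine)
  moreover have "(\<lambda>k. mpow (norm_adj E) k $ i $ j) \<longlonglongrightarrow> sqrt ((1 + real (degree E i)) * (1 + real (degree E j)))
      / (real CARD('n) + 2 * real (card (undirected_edges E)))" for i j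
    using sym irrefl connected by (rule norm_adj_mpow_tendsto)
  ultimately show ?thesis
    by (intro allI exI conjI) blast+
qed

end
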